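(* Let $\mathcal{X},\mathcal{Y}$ be finite sets, $P_X$ a probability distribution on $\mathcal{X}$ and $d:\mathcal{X}\times\mathcal{Y}\to[0,\infty)$. For every code $\mathcal{C}\subset\mathcal{Y}$ with $M$ codewords, $$D(P_X,\mathcal{C})=\tilde D\big(M^{-1},Q_Y^{\mathcal{C}}\big),$$ where $Q_Y^{\mathcal{C}}$ is the uniform distribution on $\mathcal{C}$. In particular, $D(P_X,R)\ge\inf_{Q_Y}\tilde D(e^{-R},Q_Y)$, the infimum over all probability distributions $Q_Y$ on $\mathcal{Y}$.
   Context: $D(P_X,\mathcal{C})=\mathbb{E}_{P_X}[\min_{y\in\mathcal{C}}d(X,y)]$ and $D(P_X,R)=\min_{\mathcal{C}\subset\mathcal{Y}:|\mathcal{C}|=e^R}D(P_X,\mathcal{C})$. For a distribution $Q_Y$ on $\mathcal{Y}$: $p_{c,x,y,u}=Q_Y\{y': d(x,y')<d(x,y)\}+u\cdot Q_Y\{y': d(x,y')=d(x,y)\}$ and, for $w\in(0,1]$, $\tilde D(w,Q_Y)=w^{-1}\mathbb{E}[d(X,Y)\mathbf{1}\{p_{c,X,Y,U}\le w\}]$ with $X\sim P_X$, $Y\sim Q_Y$, $U$ uniform on $[0,1]$ independent. *)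

theory Defs
  imports "HOL-Probability.Probability"
begin

definition D_code :: "'x pmf \<Rightarrow> ('x \<Rightarrow> 'y \<Rightarrow> real) \<Rightarrow> 'y set \<Rightarrow> real" where
  "D_code P d C = measure_pmf.expectation P (\<lambda>x. Min ((\<lambda>y. d x y) ` C))"

definition D_rate :: "'x pmf \<Rightarrow> ('x \<Rightarrow> 'y \<Rightarrow> real) \<Rightarrow> real \<Rightarrow> real" where
  "D_rate P d R = Min {D_code P d C | C. real (card C) = exp R}"

definition p_c :: "'y pmf \<Rightarrow> ('x \<Rightarrow> 'y \<Rightarrow> real) \<Rightarrow> 'x \<Rightarrow> 'y \<Rightarrow> real \<Rightarrow> real" where
  "p_c Q d x y u = measure_pmf.prob Q {y'. d x y' < d x y}
                   + u * measure_pmf.prob Q {y'. d x y' = d x y}"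

text \<open>D-tilde(w, Q_Y) = w^{-1} E[d(X,Y) 1{p_{c,X,Y,U} <= w}], X ~ P, Y ~ Q, U ~ Unif[0,1]
  independent (expectation written as iterated integral over the product).\<close>
definition D_tilde :: "'x pmf \<Rightarrow> ('x \<Rightarrow> 'y \<Rightarrow> real) \<Rightarrow> real \<Rightarrow> 'y pmf \<Rightarrow> real" where
  "D_tilde P d w Q = (1 / w) *
     measure_pmf.expectation P (\<lambda>x. measure_pmf.expectation Q (\<lambda>y.
        integral\<^sup>L (uniform_measure lborel {0..1::real})
          (\<lambda>u. d x y * (if p_c Q d x y u \<le> w then 1 else 0))))"

end

theory Submission
  imports Defs
begin

text \<open>Under the uniform distribution on \<open>C\<close>,
  every codeword strictly closer to \<open>x\<close> than \<open>y\<close> contributes \<open>1/M\<close> to \<open>p_c(x,y,U)\<close>, so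
  \<open>p_c(x,y,U) \<le> 1/M\<close> is a null event unless \<open>y\<close> is a nearest codeword; if it is one of \<open>k\<close>
  nearest codewords, the event has probability \<open>1/k\<close>, i.e. the randomisation \<open>U\<close> breaks ties
  uniformly. Summing over \<open>C\<close>, the truncated expectation becomes \<open>1/M\<close> times the least
  distance from \<open>x\<close> to \<open>C\<close>, and the factor \<open>w\<^sup>-\<^sup>1 = M\<close> gives the distortion of \<open>C\<close>.
  The bound on \<open>D(P\<^sub>X,R)\<close> follows by evaluating at an optimal code.\<close>

lemma integral_uniform_unit_interval_threshold:
  fixes c t :: real
  shows "integral\<^sup>L (uniform_measure lborel {0..1}) (\<lambda>u. c * (if u \<le> t then 1 else 0))
         = c * max 0 (min 1 t)"
proof -
  have "(\<lambda>u. c * (if u \<le> t then 1 else 0)) = (\<lambda>u. c * indicator {..t} u)"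
    by (auto simp: indicator_def)
  then have "integral\<^sup>L (uniform_measure lborel {0..1}) (\<lambda>u. c * (if u \<le> t then 1 else 0))
        = c * measure (uniform_measure lborel {0..1::real}) {..t}"
    by simp
  also have "measure (uniform_measure lborel {0..1::real}) {..t}
             = measure lborel ({0..1} \<inter> {..t}) / measure lborel {0..1::real}"
    by (rule measure_uniform_measure) auto
  also have "\<dots> = max 0 (min 1 t)"
  proof (cases "t < 0")
    case True
    then have "{0..1} \<inter> {..t} = ({}::real set)" by auto
    with True show ?thesis by simp
  next
    case False
    then have "{0..1} \<inter> {..t} = {0..min 1 t}" by auto
    with False show ?thesis by simp
  qed
  finally show ?thesis .
qed

lemma p_c_pmf_of_set_le_inv_card_iff:
  fixes d :: "'x \<Rightarrow> 'y \<Rightarrow> real"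
  assumes "finite C" and "y \<in> C"
  shows "p_c (pmf_of_set C) d x y u \<le> 1 / real (card C)
     \<longleftrightarrow> u \<le> (1 - real (card {y'\<in>C. d x y' < d x y})) / real (card {y'\<in>C. d x y' = d x y})"
proof -
  have "C \<noteq> {}" using assms by auto
  then have M_pos: "real (card C) > 0" using assms by (simp add: card_gt_0_iff)
  have "y \<in> {y'\<in>C. d x y' = d x y}" using assms by simp
  then have ties_pos: "real (card {y'\<in>C. d x y' = d x y}) > 0"
    using assms by (auto simp: card_gt_0_iff)
  have "p_c (pmf_of_set C) d x y u = (real (card {y'\<in>C. d x y' < d x y})
        + u * real (card {y'\<in>C. d x y' = d x y})) / real (card C)"
    using assms \<open>C \<noteq> {}\<close> by (simp add: p_c_def measure_pmf_of_set Int_def add_divide_distrib conj_commute)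
  with M_pos ties_pos show ?thesis
    by (simp add: divide_le_cancel pos_le_divide_eq algebra_simps)
qed

lemma integral_p_c_pmf_of_set_threshold:
  fixes d :: "'x \<Rightarrow> 'y \<Rightarrow> real" and x :: 'x
  assumes fin: "finite C" and yC: "y \<in> C"
  defines "K \<equiv> {y'\<in>C. d x y' = Min (d x ` C)}"
  shows "integral\<^sup>L (uniform_measure lborel {0..1})
           (\<lambda>u. d x y * (if p_c (pmf_of_set C) d x y u \<le> 1 / real (card C) then 1 else 0))
         = (if y \<in> K then Min (d x ` C) / real (card K) else 0)"
proof -
  let ?m = "Min (d x ` C)"
  let ?strict = "{y'\<in>C. d x y' < d x y}" and ?ties = "{y'\<in>C. d x y' = d x y}"
  have min_le: "?m \<le> d x y'" if "y' \<in> C" for y'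
    using fin that by simp
  have "integral\<^sup>L (uniform_measure lborel {0..1})
           (\<lambda>u. d x y * (if p_c (pmf_of_set C) d x y u \<le> 1 / real (card C) then 1 else 0))
        = d x y * max 0 (min 1 ((1 - real (card ?strict)) / real (card ?ties)))"
    by (simp only: p_c_pmf_of_set_le_inv_card_iff[OF fin yC] integral_uniform_unit_interval_threshold)
  also have "\<dots> = (if y \<in> K then ?m / real (card K) else 0)"
  proof (cases "y \<in> K")
    case True
    then have "d x y = ?m" by (simp add: K_def)
    then have strict_empty: "?strict = {}" and ties_K: "?ties = K"
      using min_le by (force simp: K_def)+
    have "card K > 0"
      using True fin by (auto simp: K_def card_gt_0_iff)
    then have "max 0 (min 1 ((1 - real (card ?strict)) / real (card ?ties))) = 1 / real (card K)"
      by (simp only: strict_empty ties_K card.empty) simp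
    with True \<open>d x y = ?m\<close> show ?thesis by simp
  next
    case False
    then have "?m < d x y" using min_le[OF yC] yC by (auto simp: K_def)
    moreover have "?m \<in> d x ` C" using fin yC by (intro Min_in) auto
    ultimately have "?strict \<noteq> {}" by auto
    then have "real (card ?strict) \<ge> 1" using fin by (simp add: Suc_le_eq card_gt_0_iff)
    then have "(1 - real (card ?strict)) / real (card ?ties) \<le> 0"
      by (simp add: divide_nonpos_nonneg)
    with False show ?thesis by simp
  qed
  finally show ?thesis .
qed

lemma sum_integral_p_c_pmf_of_set_threshold:
  fixes d :: "'x \<Rightarrow> 'y \<Rightarrow> real"
  assumes fin: "finite C" and ne: "C \<noteq> {}"
  shows "(\<Sum>y\<in>C. integral\<^sup>L (uniform_measure lborel {0..1})
           (\<lambda>u. d x y * (if p_c (pmf_of_set C) d x y u \<le> 1 / real (card C) then 1 else 0)))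
         = Min (d x ` C)"
proof -
  define K where "K = {y'\<in>C. d x y' = Min (d x ` C)}"
  have "Min (d x ` C) \<in> d x ` C" using fin ne by simp
  then have "K \<noteq> {}" by (auto simp: K_def)
  moreover have "finite K" using fin by (simp add: K_def)
  ultimately have K_pos: "card K > 0" by (simp add: card_gt_0_iff)
  have "(\<Sum>y\<in>C. integral\<^sup>L (uniform_measure lborel {0..1})
           (\<lambda>u. d x y * (if p_c (pmf_of_set C) d x y u \<le> 1 / real (card C) then 1 else 0)))
        = (\<Sum>y\<in>C. if y \<in> K then Min (d x ` C) / real (card K) else 0)"
    unfolding K_def by (intro sum.cong refl integral_p_c_pmf_of_set_threshold[OF fin])
  also have "\<dots> = (\<Sum>y\<in>K. Min (d x ` C) / real (card K))"
    using fin by (simp add: sum.inter_filter[symmetric] K_def)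
  also have "\<dots> = Min (d x ` C)" using K_pos by simp
  finally show ?thesis .
qed

lemma D_tilde_pmf_of_set:
  fixes d :: "'x \<Rightarrow> 'y \<Rightarrow> real"
  assumes "finite C" and "C \<noteq> {}"
  shows "D_tilde P d (1 / real (card C)) (pmf_of_set C) = D_code P d C"
proof -
  have "real (card C) > 0" using assms by (simp add: card_gt_0_iff)
  moreover have "measure_pmf.expectation (pmf_of_set C) (\<lambda>y.
        integral\<^sup>L (uniform_measure lborel {0..1})
          (\<lambda>u. d x y * (if p_c (pmf_of_set C) d x y u \<le> 1 / real (card C) then 1 else 0)))
      = Min (d x ` C) / real (card C)" for x
    by (subst integral_pmf_of_set[OF assms(2,1)], subst sum_integral_p_c_pmf_of_set_threshold[OF assms])
      (rule refl)
  ultimately show ?thesis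
    by (simp add: D_tilde_def D_code_def)
qed

lemma D_tilde_nonneg:
  assumes "\<And>x y. d x y \<ge> 0" and "w > 0"
  shows "D_tilde P d w Q \<ge> 0"
  unfolding D_tilde_def using assms
  by (intro mult_nonneg_nonneg integral_nonneg_AE AE_I2) auto

lemma D_rate_attained:
  fixes d :: "'x \<Rightarrow> 'y::finite \<Rightarrow> real"
  assumes "\<exists>C::'y set. real (card C) = exp R"
  obtains C :: "'y set" where "real (card C) = exp R" and "D_rate P d R = D_code P d C"
proof -
  let ?S = "{D_code P d C | C::'y set. real (card C) = exp R}"
  have "finite ?S"
    by (rule finite_subset[of _ "range (D_code P d)"]) auto
  moreover have "?S \<noteq> {}" using assms by auto
  ultimately have "D_rate P d R \<in> ?S"
    unfolding D_rate_def by (rule Min_in)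
  with that show ?thesis by auto
qed

theorem theorem2:
  fixes P :: "'x::finite pmf" and d :: "'x \<Rightarrow> 'y::finite \<Rightarrow> real"
  assumes d_nonneg: "\<And>x y. d x y \<ge> 0"
  shows "(\<forall>C::'y set. C \<noteq> {} \<longrightarrow>
            D_code P d C = D_tilde P d (1 / real (card C)) (pmf_of_set C))
       \<and> (\<forall>R::real. (\<exists>C::'y set. real (card C) = exp R) \<longrightarrow>
            D_rate P d R \<ge> (INF Q::'y pmf. D_tilde P d (exp (- R)) Q))"
proof (intro conjI allI impI)
  show "D_code P d C = D_tilde P d (1 / real (card C)) (pmf_of_set C)" if "C \<noteq> {}" for C :: "'y set"
    using that by (simp add: D_tilde_pmf_of_set)
next
  fix R :: real
  assume "\<exists>C::'y set. real (card C) = exp R"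
  then obtain C :: "'y set" where card_C: "real (card C) = exp R" and opt: "D_rate P d R = D_code P d C"
    by (rule D_rate_attained)
  then have "C \<noteq> {}" by auto
  have "1 / real (card C) = exp (- R)" using card_C by (simp add: exp_minus divide_inverse)
  then have "D_rate P d R = D_tilde P d (exp (- R)) (pmf_of_set C)"
    using opt D_tilde_pmf_of_set[where P = P and d = d, OF finite \<open>C \<noteq> {}\<close>] by simp
  moreover have "(INF Q. D_tilde P d (exp (- R)) Q) \<le> D_tilde P d (exp (- R)) (pmf_of_set C)"
    by (rule cINF_lower) (auto intro!: bdd_belowI[where m = 0] D_tilde_nonneg d_nonneg)
  ultimately show "D_rate P d R \<ge> (INF Q. D_tilde P d (exp (- R)) Q)" by simp
qed

end
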